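(* Let $C\subset\mathbb{R}^n$ be a pointed, $n$-dimensional closed convex cone and $\Omega=S^{n-1}\cap\operatorname{int}C^{\circ}$. Let $\mu$ be a nonzero, finite Borel measure on $\Omega$, and let $(\omega_i)_{i\in\mathbb{N}}$ be compact subsets of $\Omega$ with $\omega_i\subset\operatorname{int}\omega_{i+1}$ and $\bigcup_i\omega_i=\Omega$. Let $\mu_i(\sigma)=\mu(\sigma\cap\omega_i)$, let $i_0$ be such that $\mu_{i_0}\neq0$, and for $f\in C^+(\omega_i)$ let $I_{\mu_i}(f)=\gamma^n([f])\int_{\omega_i}f\,d\mu_i$, where $[f]$ is the Wulff shape associated with $(C,\omega_i,f)$. Suppose that for each $i\ge i_0$ there is a $C$-pseudo-cone $K_i\in\mathcal{K}(C,\omega_i)$ with $I_{\mu_i}(\bar h_{K_i})=\sup\{I_{\mu_i}(f):f\in C^+(\omega_i)\}$. Then there exists a constant $a>0$ such that $I_{\mu_i}(\bar h_{K_i})>a$ for all $i\ge i_0$.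
   Context: $C^{\circ}=\{x:\langle x,y\rangle\le 0\ \forall y\in C\}$. A pseudo-cone is a nonempty closed convex set $K$ with $o\notin K$ and $\lambda K\subseteq K$ for $\lambda\ge1$; it is a $C$-pseudo-cone if its recession cone $\{z:K+z\subseteq K\}$ equals $C$. Support function $h_K(x)=\sup_{y\in K}\langle x,y\rangle$ on $C^{\circ}$, $\bar h_K=-h_K$; $H_K^-(u)=\{x:\langle x,u\rangle\le h_K(u)\}$. $\mathcal{K}(C,\omega)$ is the set of $C$-pseudo-cones $K$ with $K=C\cap\bigcap_{u\in\omega}H^-_K(u)$. $C^+(\omega)$ denotes the set of continuous functions $\omega\to(0,\infty)$. The Wulff shape of a positive continuous $h$ on compact $\omega\subset\Omega$ is $[h]=C\cap\bigcap_{u\in\omega}\{y:\langle y,u\rangle\le -h(u)\}$. $\gamma^n$ is the standard Gaussian probability measure on $\mathbb{R}^n$. *)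

theory Defs
  imports "HOL-Analysis.Analysis" "HOL-Probability.Probability"
begin

definition polar_cone :: "'a::euclidean_space set \<Rightarrow> 'a set" where
  "polar_cone C = {x. \<forall>y\<in>C. x \<bullet> y \<le> 0}"

definition pointed_ndim_closed_convex_cone :: "'a::euclidean_space set \<Rightarrow> bool" where
  "pointed_ndim_closed_convex_cone C \<longleftrightarrow>
     cone C \<and> convex C \<and> closed C \<and> C \<inter> uminus ` C = {0} \<and> interior C \<noteq> {}"

definition Omega :: "'a::euclidean_space set \<Rightarrow> 'a set" where
  "Omega C = sphere 0 1 \<inter> interior (polar_cone C)"

definition recession_cone :: "'a::euclidean_space set \<Rightarrow> 'a set" where
  "recession_cone K = {z. \<forall>y\<in>K. y + z \<in> K}"

definition pseudo_cone :: "'a::euclidean_space set \<Rightarrow> bool" where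
  "pseudo_cone K \<longleftrightarrow> K \<noteq> {} \<and> closed K \<and> convex K \<and> 0 \<notin> K \<and>
     (\<forall>t::real. t \<ge> 1 \<longrightarrow> (\<lambda>y. t *\<^sub>R y) ` K \<subseteq> K)"

definition C_pseudo_cone :: "'a::euclidean_space set \<Rightarrow> 'a set \<Rightarrow> bool" where
  "C_pseudo_cone C K \<longleftrightarrow> pseudo_cone K \<and> recession_cone K = C"

text \<open>Support function, meant to be evaluated on the polar cone.\<close>
definition supp_fun :: "'a::euclidean_space set \<Rightarrow> 'a \<Rightarrow> real" where
  "supp_fun K x = Sup ((\<lambda>y. x \<bullet> y) ` K)"

definition bar_supp :: "'a::euclidean_space set \<Rightarrow> 'a \<Rightarrow> real" where
  "bar_supp K x = - supp_fun K x"

definition H_minus :: "'a::euclidean_space set \<Rightarrow> 'a \<Rightarrow> 'a set" where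
  "H_minus K u = {x. x \<bullet> u \<le> supp_fun K u}"

definition Kclass :: "'a::euclidean_space set \<Rightarrow> 'a set \<Rightarrow> 'a set set" where
  "Kclass C \<omega> = {K. C_pseudo_cone C K \<and> K = C \<inter> (\<Inter>u\<in>\<omega>. H_minus K u)}"

definition Cplus :: "'a::topological_space set \<Rightarrow> ('a \<Rightarrow> real) set" where
  "Cplus \<omega> = {f. continuous_on \<omega> f \<and> (\<forall>u\<in>\<omega>. f u > 0)}"

definition wulff :: "'a::euclidean_space set \<Rightarrow> 'a set \<Rightarrow> ('a \<Rightarrow> real) \<Rightarrow> 'a set" where
  "wulff C \<omega> h = C \<inter> (\<Inter>u\<in>\<omega>. {y. y \<bullet> u \<le> - h u})"

definition gaussian :: "'a::euclidean_space measure" where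
  "gaussian = density lborel
     (\<lambda>x. ennreal ((2 * pi) powr (- real DIM('a) / 2) * exp (- (norm x)\<^sup>2 / 2)))"

definition restr_meas :: "'a measure \<Rightarrow> 'a set \<Rightarrow> 'a measure" where
  "restr_meas \<mu> \<omega> = density \<mu> (indicator \<omega>)"

definition I_fun :: "'a::euclidean_space set \<Rightarrow> 'a measure \<Rightarrow> 'a set \<Rightarrow> ('a \<Rightarrow> real) \<Rightarrow> real" where
  "I_fun C \<mu> \<omega> f = measure gaussian (wulff C \<omega> f) * (LINT u:\<omega>|restr_meas \<mu> \<omega>. f u)"

end

theory Submission
  imports Defs
begin

text \<open>
  The lower bound comes from comparing the maximiser with the constant function 1:
  \<open>I(-h\<^sub>K\<^sub>i) \<ge> I(1) = \<gamma>\<^sup>n([1]) \<mu>(\<omega>\<^sub>i)\<close>. A ball of radius 1 lies deep enough inside \<open>C\<close> to satisfy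
  \<open>\<langle>y, u\<rangle> \<le> -1\<close> for every \<open>u \<in> \<Omega>\<close>, so it lies in every Wulff shape \<open>[1]\<close> and
  \<open>\<gamma>\<^sup>n([1])\<close> is bounded below uniformly; \<open>\<mu>(\<omega>\<^sub>i) \<ge> \<mu>(\<omega>\<^sub>i\<^sub>0) > 0\<close> since the \<open>\<omega>\<^sub>i\<close> increase.
\<close>

lemma gaussian_density_eq_prod_std_normal_density:
  fixes x :: "'a::euclidean_space"
  shows "(2 * pi) powr (- real DIM('a) / 2) * exp (- (norm x)\<^sup>2 / 2) =
    (\<Prod>b\<in>Basis. std_normal_density (x \<bullet> b))"
proof -
  have "(2 * pi) powr (- real DIM('a) / 2) = ((2 * pi) powr (- 1 / 2)) ^ DIM('a)"
    by (simp add: powr_powr powr_realpow [symmetric])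
  also have "(2 * pi) powr (- 1 / 2) = 1 / sqrt (2 * pi)"
    by (simp add: powr_minus_divide powr_half_sqrt)
  finally have const: "(2 * pi) powr (- real DIM('a) / 2) = (\<Prod>b\<in>(Basis::'a set). 1 / sqrt (2 * pi))"
    by simp
  have "(norm x)\<^sup>2 = (\<Sum>b\<in>Basis. (x \<bullet> b)\<^sup>2)"
    unfolding power2_norm_eq_inner by (subst euclidean_inner) (simp add: power2_eq_square)
  then have "exp (- (norm x)\<^sup>2 / 2) = (\<Prod>b\<in>(Basis::'a set). exp (- (x \<bullet> b)\<^sup>2 / 2))"
    by (simp add: exp_sum [symmetric] sum_negf sum_divide_distrib)
  then show ?thesis
    unfolding const std_normal_density_def prod.distrib by simp
qed

lemma sets_gaussian [simp]: "sets (gaussian :: 'a::euclidean_space measure) = sets borel"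
  by (simp add: gaussian_def)

lemma prob_space_gaussian: "prob_space (gaussian :: 'a::euclidean_space measure)"
proof
  have "emeasure (gaussian :: 'a measure) UNIV =
      (\<integral>\<^sup>+x. (\<Prod>b\<in>(Basis::'a set). ennreal (std_normal_density (x \<bullet> b))) \<partial>lborel)"
    unfolding gaussian_def gaussian_density_eq_prod_std_normal_density
    by (simp add: emeasure_density prod_ennreal)
  also have "\<dots> = (\<Prod>b\<in>(Basis::'a set). \<integral>\<^sup>+x. ennreal (std_normal_density x) \<partial>lborel)"
    by (rule nn_integral_lborel_prod) auto
  also have "(\<integral>\<^sup>+x. ennreal (std_normal_density x) \<partial>lborel) = 1"
    by (subst nn_integral_eq_integral) auto
  finally show "emeasure (gaussian :: 'a measure) (space gaussian) = 1"
    by (simp add: gaussian_def)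
qed

lemma measure_gaussian_ball_pos:
  fixes z :: "'a::euclidean_space"
  assumes "r > 0"
  shows "0 < measure gaussian (ball z r)"
proof -
  interpret prob_space "gaussian :: 'a measure" by (rule prob_space_gaussian)
  define dens :: "'a \<Rightarrow> real" where
    "dens x = (2 * pi) powr (- real DIM('a) / 2) * exp (- (norm x)\<^sup>2 / 2)" for x
  define c where "c = (2 * pi) powr (- real DIM('a) / 2) * exp (- (norm z + r)\<^sup>2 / 2)"
  have "c > 0"
    by (simp add: c_def)
  have c_le: "ennreal c * indicator (ball z r) x \<le> ennreal (dens x) * indicator (ball z r) x" for x
  proof (cases "x \<in> ball z r")
    case True
    then have "norm x \<le> norm z + r"
      using norm_triangle_sub[of x z] by (simp add: dist_norm norm_minus_commute)
    then have "(norm x)\<^sup>2 \<le> (norm z + r)\<^sup>2"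
      by (intro power_mono) auto
    then have "c \<le> dens x"
      by (simp add: c_def dens_def)
    then show ?thesis
      using True by (simp add: ennreal_leI)
  qed simp
  have "0 < ennreal (c * measure lborel (ball z r))"
    using \<open>c > 0\<close> assms by simp
  also have "\<dots> = ennreal c * emeasure lborel (ball z r)"
    using \<open>c > 0\<close> emeasure_lborel_ball_finite[of z r]
    by (simp add: ennreal_mult emeasure_eq_ennreal_measure)
  also have "\<dots> = (\<integral>\<^sup>+x. ennreal c * indicator (ball z r) x \<partial>lborel)"
    by (simp add: nn_integral_cmult_indicator)
  also have "\<dots> \<le> (\<integral>\<^sup>+x. ennreal (dens x) * indicator (ball z r) x \<partial>lborel)"
    by (intro nn_integral_mono c_le)
  also have "\<dots> = emeasure gaussian (ball z r)"
    by (simp add: gaussian_def dens_def emeasure_density)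
  finally show ?thesis
    by (simp add: emeasure_eq_measure)
qed

lemma closed_wulff:
  assumes "closed C"
  shows "closed (wulff C \<omega> h)"
  unfolding wulff_def
  by (intro closed_Int assms closed_INT ballI closed_Collect_le continuous_intros)

lemma wulff_antimono:
  assumes "\<omega> \<subseteq> \<omega>'"
  shows "wulff C \<omega>' h \<subseteq> wulff C \<omega> h"
  using assms unfolding wulff_def by blast

text \<open>
  If \<open>ball y\<^sub>0 r \<subseteq> C\<close>, then \<open>\<langle>y\<^sub>0, u\<rangle> \<le> -r/2\<close> for all unit \<open>u\<close> in the polar cone. So \<open>z = (4/r) y\<^sub>0\<close>
  has \<open>\<langle>z, u\<rangle> \<le> -2\<close>, and the unit ball around \<open>z\<close> is \<open>4/r\<close> times a subset of \<open>ball y\<^sub>0 r\<close>.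
\<close>
lemma ball_subset_wulff_Omega_one:
  fixes C :: "'a::euclidean_space set"
  assumes "cone C" and "interior C \<noteq> {}"
  obtains z where "ball z 1 \<subseteq> wulff C (Omega C) (\<lambda>_. 1)"
proof -
  obtain y0 r where "r > 0" and ball_C: "ball y0 r \<subseteq> C"
    using assms(2) by (auto simp: mem_interior)
  define z where "z = (4 / r) *\<^sub>R y0"
  have "y \<in> wulff C (Omega C) (\<lambda>_. 1)" if y: "y \<in> ball z 1" for y
  proof -
    have "(r / 4) *\<^sub>R y \<in> ball y0 r"
    proof -
      have "dist y0 ((r / 4) *\<^sub>R y) = dist ((r / 4) *\<^sub>R z) ((r / 4) *\<^sub>R y)"
        using \<open>r > 0\<close> by (simp add: z_def)
      also have "\<dots> = (r / 4) * dist z y"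
        using \<open>r > 0\<close> by (simp add: dist_norm scaleR_diff_right [symmetric])
      also have "\<dots> < r"
        using y \<open>r > 0\<close> by simp
      finally show ?thesis
        by simp
    qed
    then have "(r / 4) *\<^sub>R y \<in> C"
      using ball_C by blast
    then have "(4 / r) *\<^sub>R ((r / 4) *\<^sub>R y) \<in> C"
      using \<open>cone C\<close> \<open>r > 0\<close> by (metis cone_def divide_nonneg_pos zero_le_numeral)
    then have "y \<in> C"
      using \<open>r > 0\<close> by simp
    moreover have "y \<bullet> u \<le> - 1" if u: "u \<in> Omega C" for u
    proof -
      have "norm u = 1" and "u \<in> polar_cone C"
        using u interior_subset unfolding Omega_def by auto
      have "y0 + (r / 2) *\<^sub>R u \<in> C"
        using ball_C \<open>r > 0\<close> \<open>norm u = 1\<close> by (auto simp: dist_norm)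
      then have "u \<bullet> (y0 + (r / 2) *\<^sub>R u) \<le> 0"
        using \<open>u \<in> polar_cone C\<close> unfolding polar_cone_def by blast
      then have "u \<bullet> y0 \<le> - r / 2"
        using \<open>norm u = 1\<close> by (simp add: inner_add_right power2_norm_eq_inner [symmetric])
      then have "z \<bullet> u \<le> -2"
        using \<open>r > 0\<close> by (simp add: z_def inner_commute field_simps)
      moreover have "(y - z) \<bullet> u \<le> 1"
        using norm_cauchy_schwarz[of "y - z" u] y \<open>norm u = 1\<close>
        by (simp add: dist_norm norm_minus_commute)
      ultimately show ?thesis
        by (simp add: inner_diff_left)
    qed
    ultimately show ?thesis
      unfolding wulff_def by auto
  qed
  then show thesis
    using that by blast
qed

lemma emeasure_restr_meas:
  assumes "\<omega> \<in> sets \<mu>" and "A \<in> sets \<mu>"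
  shows "emeasure (restr_meas \<mu> \<omega>) A = emeasure \<mu> (\<omega> \<inter> A)"
proof -
  have "emeasure (restr_meas \<mu> \<omega>) A = (\<integral>\<^sup>+x. indicator (\<omega> \<inter> A) x \<partial>\<mu>)"
    unfolding restr_meas_def using assms
    by (simp add: emeasure_density indicator_inter_arith ennreal_mult')
  also have "\<dots> = emeasure \<mu> (\<omega> \<inter> A)"
    using assms by (intro nn_integral_indicator) auto
  finally show ?thesis .
qed

lemma compact_in_sets_restrict_space_borel:
  fixes A :: "'a::t2_space set"
  assumes "compact A" and "A \<subseteq> \<Omega>"
  shows "A \<in> sets (restrict_space borel \<Omega>)"
  using assms unfolding sets_restrict_space
  by (auto intro!: image_eqI[of _ _ A] borel_closed compact_imp_closed)

lemma I_fun_const_one: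
  assumes "\<omega> \<in> sets \<mu>"
  shows "I_fun C \<mu> \<omega> (\<lambda>_. 1) = measure gaussian (wulff C \<omega> (\<lambda>_. 1)) * measure \<mu> \<omega>"
proof -
  have "\<omega> \<subseteq> space (restr_meas \<mu> \<omega>)"
    using sets.sets_into_space[OF assms] by (simp add: restr_meas_def)
  then have "(LINT u:\<omega>|restr_meas \<mu> \<omega>. 1) = measure (restr_meas \<mu> \<omega>) \<omega>"
    by (simp add: set_lebesgue_integral_def Int_absorb2)
  also have "\<dots> = measure \<mu> \<omega>"
    using assms by (simp add: measure_def emeasure_restr_meas)
  finally show ?thesis
    by (simp add: I_fun_def)
qed

lemma I_fun_const_one_lower_bound:
  fixes C :: "'a::euclidean_space set"
  assumes "pointed_ndim_closed_convex_cone C"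
  obtains c where "c > 0"
    and "\<And>\<mu> \<omega>. \<omega> \<subseteq> Omega C \<Longrightarrow> \<omega> \<in> sets \<mu> \<Longrightarrow> c * measure \<mu> \<omega> \<le> I_fun C \<mu> \<omega> (\<lambda>_. 1)"
proof -
  interpret prob_space "gaussian :: 'a measure" by (rule prob_space_gaussian)
  have "cone C" and "closed C" and "interior C \<noteq> {}"
    using assms by (auto simp: pointed_ndim_closed_convex_cone_def)
  obtain z where z: "ball z 1 \<subseteq> wulff C (Omega C) (\<lambda>_. 1)"
    using ball_subset_wulff_Omega_one[OF \<open>cone C\<close> \<open>interior C \<noteq> {}\<close>] .
  have "measure gaussian (ball z 1) * measure \<mu> \<omega> \<le> I_fun C \<mu> \<omega> (\<lambda>_. 1)"
    if "\<omega> \<subseteq> Omega C" and "\<omega> \<in> sets \<mu>" for \<mu> :: "'a measure" and \<omega>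
  proof -
    have "ball z 1 \<subseteq> wulff C \<omega> (\<lambda>_. 1)"
      using z wulff_antimono[OF \<open>\<omega> \<subseteq> Omega C\<close>] by blast
    then have "measure gaussian (ball z 1) \<le> measure gaussian (wulff C \<omega> (\<lambda>_. 1))"
      using closed_wulff[OF \<open>closed C\<close>] by (intro finite_measure_mono) (auto simp: borel_closed)
    then show ?thesis
      using \<open>\<omega> \<in> sets \<mu>\<close> by (simp add: I_fun_const_one mult_right_mono)
  qed
  then show thesis
    using that measure_gaussian_ball_pos[of 1 z] by simp
qed

theorem lemma4p3:
  fixes C :: "'a::euclidean_space set"
    and \<mu> :: "'a measure"
    and \<omega> :: "nat \<Rightarrow> 'a set"
    and K :: "nat \<Rightarrow> 'a set"
    and i0 :: nat
  assumes cone: "pointed_ndim_closed_convex_cone C"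
    and mu_sets: "sets \<mu> = sets (restrict_space borel (Omega C))"
    and mu_finite: "finite_measure \<mu>"
    and mu_nonzero: "emeasure \<mu> (Omega C) \<noteq> 0"
    and om_compact: "\<And>i. compact (\<omega> i)"
    and om_sub: "\<And>i. \<omega> i \<subseteq> Omega C"
    and om_int: "\<And>i. \<omega> i \<subseteq> (top_of_set (Omega C)) interior_of (\<omega> (Suc i))"
    and om_union: "(\<Union>i. \<omega> i) = Omega C"
    and i0: "emeasure (restr_meas \<mu> (\<omega> i0)) (Omega C) \<noteq> 0"
    and K_class: "\<And>i. i \<ge> i0 \<Longrightarrow> K i \<in> Kclass C (\<omega> i)"
    and K_max: "\<And>i. i \<ge> i0 \<Longrightarrow>
       ereal (I_fun C \<mu> (\<omega> i) (bar_supp (K i))) =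
       (SUP f \<in> Cplus (\<omega> i). ereal (I_fun C \<mu> (\<omega> i) f))"
  shows "\<exists>a>0. \<forall>i\<ge>i0. I_fun C \<mu> (\<omega> i) (bar_supp (K i)) > a"
proof -
  interpret finite_measure \<mu> by (rule mu_finite)
  obtain c where "c > 0" and c_le_I_one:
    "\<And>\<omega>'. \<omega>' \<subseteq> Omega C \<Longrightarrow> \<omega>' \<in> sets \<mu> \<Longrightarrow> c * measure \<mu> \<omega>' \<le> I_fun C \<mu> \<omega>' (\<lambda>_. 1)"
    using I_fun_const_one_lower_bound[OF cone] by metis
  have space_mu: "space \<mu> = Omega C"
    using sets_eq_imp_space_eq[OF mu_sets] by (simp add: space_restrict_space)
  have om_sets: "\<omega> i \<in> sets \<mu>" for i
    unfolding mu_sets by (intro compact_in_sets_restrict_space_borel om_compact om_sub)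
  have "incseq \<omega>"
    unfolding incseq_Suc_iff using om_int interior_of_subset by (meson order_trans)
  have "measure \<mu> (\<omega> i0) > 0"
    using i0 om_sub[of i0] by (simp add: emeasure_restr_meas om_sets space_mu [symmetric]
        Int_absorb2 emeasure_eq_measure zero_less_measure_iff)
  have lower: "c * measure \<mu> (\<omega> i0) \<le> I_fun C \<mu> (\<omega> i) (bar_supp (K i))" if "i \<ge> i0" for i
  proof -
    have "c * measure \<mu> (\<omega> i0) \<le> c * measure \<mu> (\<omega> i)"
      using \<open>c > 0\<close> monoD[OF \<open>incseq \<omega>\<close> \<open>i \<ge> i0\<close>] om_sets by (simp add: finite_measure_mono)
    also have "\<dots> \<le> I_fun C \<mu> (\<omega> i) (\<lambda>_. 1)"
      by (rule c_le_I_one[OF om_sub om_sets])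
    also have "\<dots> \<le> I_fun C \<mu> (\<omega> i) (bar_supp (K i))"
    proof -
      have "ereal (I_fun C \<mu> (\<omega> i) (\<lambda>_. 1)) \<le> ereal (I_fun C \<mu> (\<omega> i) (bar_supp (K i)))"
        unfolding K_max[OF \<open>i \<ge> i0\<close>] by (rule SUP_upper) (simp add: Cplus_def)
      then show ?thesis
        by simp
    qed
    finally show ?thesis .
  qed
  have "c * measure \<mu> (\<omega> i0) > 0"
    using \<open>c > 0\<close> \<open>measure \<mu> (\<omega> i0) > 0\<close> by simp
  then show ?thesis
    using lower by (intro exI[of _ "c * measure \<mu> (\<omega> i0) / 2"]) force
qed

end
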